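(* Let $f\in C([0,1])$. Then $f\in\mathcal{F}_0$ if and only if there exist real numbers $\alpha_h$, $h\in\mathbf{Z}$, such that $$f(t)=\alpha_0t+\lim_{N\to+\infty}\sum_{1\le|h|\le N}\alpha_h\frac{e(ht)-1}{2i\pi h}\Bigl(1-\frac{|h|}{N}\Bigr)$$ uniformly for $t\in[0,1]$. For $f\in\mathcal{F}_0$, this expansion holds if and only if $\alpha_0=f(1)$ and $\alpha_h=f(1)+2i\pi h\widehat f(h)$ for $h\neq0$, where $\widehat f(h)=\int_0^1f(t)e(-ht)\,dt$. Moreover, for $f\in\mathcal{F}_0$ with these coefficients, $f\in\mathcal{S}$ if and only if $|\alpha_h|\le2$ for all $h\in\mathbf{Z}$.
   Context: $e(z)=e^{2i\pi z}$. $C([0,1])$ is the space of continuous complex-valued functions on $[0,1]$ with the sup norm. $\mathcal{F}_0$ is the real vector space of all $f\in C([0,1])$ such that $f(t)+\overline{f(1-t)}=f(1)$ for all $t\in[0,1]$. $\mathcal{S}$ is the support in $C([0,1])$ of the law of the random series $\mathrm{K}(t)=t\,\mathrm{ST}_0+\sum_{h\neq0}\frac{e(ht)-1}{2\pi i h}\mathrm{ST}_h$, where $(\mathrm{ST}_h)_{h\in\mathbf{Z}}$ are independent with Sato–Tate law $\frac1\pi\sqrt{1-x^2/4}\,dx$ on $[-2,2]$ (almost surely uniformly convergent via symmetric partial sums); equivalently, $\mathcal{S}$ is the set of $f\in C([0,1])$ with $f(0)=0$, $f(1)\in[-2,2]$, and such that $g(t)=f(t)-tf(1)$ has $\widehat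 g(h)\in i\mathbf{R}$ and $|\widehat g(h)|\le1/(\pi|h|)$ for all $h\ne0$. *)

theory Defs
  imports "HOL-Analysis.Analysis"
begin

definition e :: "complex \<Rightarrow> complex" where
  "e z = exp (2 * of_real pi * \<i> * z)"

definition fourier_coeff :: "(real \<Rightarrow> complex) \<Rightarrow> int \<Rightarrow> complex" where
  "fourier_coeff f h = integral {0..1} (\<lambda>t. f t * e (- (of_int h * of_real t)))"

definition F0 :: "(real \<Rightarrow> complex) set" where
  "F0 = {f. continuous_on {0..1} f \<and>
            (\<forall>t\<in>{0..1}. f t + cnj (f (1 - t)) = f 1)}"

text \<open>The support S, via the equivalent description given in the context.\<close>
definition S :: "(real \<Rightarrow> complex) set" where
  "S = {f. continuous_on {0..1} f \<and> f 0 = 0 \<and> f 1 \<in> complex_of_real ` {-2..2} \<and>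
           (let g = (\<lambda>t. f t - of_real t * f 1) in
            \<forall>h::int. h \<noteq> 0 \<longrightarrow>
              Re (fourier_coeff g h) = 0 \<and>
              norm (fourier_coeff g h) \<le> 1 / (pi * \<bar>of_int h\<bar>))}"

definition fejer_partial :: "(int \<Rightarrow> real) \<Rightarrow> nat \<Rightarrow> real \<Rightarrow> complex" where
  "fejer_partial \<alpha> N t =
     of_real (\<alpha> 0) * of_real t +
     (\<Sum>h\<in>{-int N..int N} - {0}.
        of_real (\<alpha> h) * (e (of_int h * of_real t) - 1) / (2 * \<i> * of_real pi * of_int h)
        * of_real (1 - of_int \<bar>h\<bar> / real N))"

definition has_expansion :: "(int \<Rightarrow> real) \<Rightarrow> (real \<Rightarrow> complex) \<Rightarrow> bool" where
  "has_expansion \<alpha> f \<longleftrightarrow> uniform_limit {0..1} (fejer_partial \<alpha>) f sequentially"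

definition expansion_coeffs :: "(real \<Rightarrow> complex) \<Rightarrow> (int \<Rightarrow> real) \<Rightarrow> bool" where
  "expansion_coeffs f \<alpha> \<longleftrightarrow> complex_of_real (\<alpha> 0) = f 1 \<and>
     (\<forall>h::int. h \<noteq> 0 \<longrightarrow>
        complex_of_real (\<alpha> h) = f 1 + 2 * \<i> * of_real pi * of_int h * fourier_coeff f h)"

end

theory Submission
  imports Defs
begin

(*
  Put g(t) = f(t) - t f(1).  When f(0) = 0 we have g(0) = g(1) = 0, and for h \<noteq> 0 the
  Fourier coefficient of g is \<alpha>_h / (2 i \<pi> h) with \<alpha>_h = f(1) + 2 i \<pi> h f^(h).  Hence the
  Fejer-weighted partial sum of the expansion equals f(1) t + \<sigma>_N g(t) - \<sigma>_N g(0), where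
  \<sigma>_N g is the Fejer mean of the Fourier series of g, and Fejer's theorem for the continuous
  periodic function g gives uniform convergence to f.  Conversely, integrating a uniformly
  convergent expansion against e(-kt) recovers the coefficients, and evaluating it at t = 1
  gives \<alpha>_0 = f(1).  The symmetry f(t) + cnj (f (1 - t)) = f(1) defining F0 is what makes
  these \<alpha>_h real, and every Fejer partial sum with real coefficients has that symmetry.
  Finally, the conditions defining S say |g^(h)| = |\<alpha>_h| / (2 \<pi> |h|) \<le> 1 / (\<pi> |h|).
*)

lemma e_add: "e (a + b) = e a * e b"
  unfolding e_def by (simp add: distrib_left exp_add)

lemma e_of_int: "e (of_int h) = 1"
proof -
  have "e (of_int h) = exp (\<i> * (of_int h * (of_real pi * 2)))"
    unfolding e_def by (simp add: ac_simps)
  then show ?thesis by simp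
qed

lemma e_zero [simp]: "e 0 = 1"
  unfolding e_def by simp

lemma e_of_nat_mult: "e (of_nat k * z) = e z ^ k"
  unfolding e_def by (simp add: exp_of_nat_mult[symmetric] ac_simps)

lemma e_of_real: "e (of_real x) = cis (2 * pi * x)"
  unfolding e_def by (simp add: cis_conv_exp ac_simps)

lemma cnj_e_of_real: "cnj (e (of_real x)) = e (- of_real x)"
  unfolding e_def by (simp add: exp_cnj)

lemma cnj_e_minus: "cnj (e (- (of_int h * of_real s))) = e (of_int h * of_real s)"
  unfolding e_def by (simp add: exp_cnj)

lemma cnj_e_reflect: "cnj (e (of_int h * of_real (1 - t))) = e (of_int h * of_real t)"
proof -
  have "e (of_int h * of_real (1 - t)) = e (of_int h) * e (- (of_int h * of_real t))"
    unfolding e_add[symmetric] by (simp add: algebra_simps)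
  then show ?thesis by (simp add: e_of_int cnj_e_minus)
qed

lemma norm_e_of_real [simp]: "norm (e (of_real x)) = 1"
  unfolding e_def by simp

lemma norm_e_of_real_minus_1_sq: "(norm (e (of_real x) - 1))\<^sup>2 = 2 - 2 * cos (2 * pi * x)"
proof -
  have "(norm (e (of_real x) - 1))\<^sup>2 = (cos (2 * pi * x) - 1)\<^sup>2 + (sin (2 * pi * x))\<^sup>2"
    unfolding e_of_real by (simp add: cmod_power2)
  also have "\<dots> = 2 - 2 * cos (2 * pi * x)"
    by (simp add: power2_eq_square algebra_simps)
  finally show ?thesis .
qed

lemma continuous_on_e [continuous_intros]:
  "continuous_on A f \<Longrightarrow> continuous_on A (\<lambda>x. e (f x))"
  unfolding e_def by (intro continuous_intros)

lemma fundamental_theorem_of_calculus_complex_01: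
  fixes F f :: "complex \<Rightarrow> complex"
  assumes "\<And>z. (F has_field_derivative f z) (at z)"
  shows "((\<lambda>t. f (of_real t)) has_integral (F 1 - F 0)) {0..1}"
proof -
  have "((\<lambda>t. f (of_real t)) has_integral ((\<lambda>t. F (of_real t)) 1 - (\<lambda>t. F (of_real t)) 0)) {0..1}"
    by (rule fundamental_theorem_of_calculus)
       (auto intro!: has_vector_derivative_real_field assms)
  then show ?thesis by simp
qed

lemma e_of_int_mult_eq_exp: "e (of_int m * z) = exp (z * (2 * of_real pi * \<i> * of_int m))"
  unfolding e_def by (simp add: ac_simps)

lemma has_integral_e:
  "((\<lambda>t. e (of_int m * of_real t)) has_integral (if m = 0 then 1 else 0)) {0..1}"
proof (cases "m = 0")
  case True
  then show ?thesis using has_integral_const_real[of "1::complex" 0 1] by simp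
next
  case False
  define c where "c = 2 * of_real pi * \<i> * (of_int m :: complex)"
  have "c \<noteq> 0" using False by (simp add: c_def)
  then have "((\<lambda>t. exp (of_real t * c)) has_integral (exp (1 * c) / c - exp (0 * c) / c)) {0..1}"
    by (intro fundamental_theorem_of_calculus_complex_01) (auto intro!: derivative_eq_intros)
  moreover have "exp c = 1" using e_of_int[of m] unfolding e_def c_def by (simp add: ac_simps)
  ultimately show ?thesis using False by (simp add: e_of_int_mult_eq_exp c_def)
qed

lemma has_integral_of_real_mult_e:
  assumes "m \<noteq> 0"
  shows "((\<lambda>t. of_real t * e (of_int m * of_real t)) has_integral
           (1 / (2 * of_real pi * \<i> * of_int m))) {0..1}"
proof -
  define c where "c = 2 * of_real pi * \<i> * (of_int m :: complex)"
  have "c \<noteq> 0" using assms by (simp add: c_def)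
  then have "((\<lambda>t. of_real t * exp (of_real t * c)) has_integral
      ((1 * exp (1 * c) / c - exp (1 * c) / c\<^sup>2) - (0 * exp (0 * c) / c - exp (0 * c) / c\<^sup>2))) {0..1}"
    by (intro fundamental_theorem_of_calculus_complex_01)
       (auto intro!: derivative_eq_intros simp: field_simps power2_eq_square)
  moreover have "exp c = 1" using e_of_int[of m] unfolding e_def c_def by (simp add: ac_simps)
  ultimately show ?thesis by (simp add: e_of_int_mult_eq_exp c_def)
qed

lemma sum_symmetric_interval_split:
  fixes F :: "int \<Rightarrow> 'a::comm_monoid_add"
  shows "(\<Sum>h\<in>{-int N..int N}. F h) = F 0 + (\<Sum>k<N. F (int N - int k)) + (\<Sum>j<N. F (int j - int N))"
proof -
  have pos: "(\<Sum>k<N. F (int N - int k)) = (\<Sum>h\<in>{1..int N}. F h)"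
    by (rule sum.reindex_bij_witness[where i="\<lambda>h. nat (int N - h)" and j="\<lambda>k. int N - int k"]) auto
  have neg: "(\<Sum>j<N. F (int j - int N)) = (\<Sum>h\<in>{-int N..-1}. F h)"
    by (rule sum.reindex_bij_witness[where i="\<lambda>h. nat (int N + h)" and j="\<lambda>k. int k - int N"]) auto
  have "{-int N..int N} = {-int N..-1} \<union> ({0} \<union> {1..int N})" by auto
  then have "(\<Sum>h\<in>{-int N..int N}. F h) = (\<Sum>h\<in>{-int N..-1}. F h) + (F 0 + (\<Sum>h\<in>{1..int N}. F h))"
    by (simp add: sum.union_disjoint ac_simps)
  then show ?thesis by (simp add: pos neg ac_simps)
qed

lemma double_sum_of_diff:
  fixes F :: "int \<Rightarrow> 'a::comm_ring_1"
  shows "(\<Sum>j<N. \<Sum>k<N. F (int j - int k)) = (\<Sum>h\<in>{-int N..int N}. of_int (int N - \<bar>h\<bar>) * F h)"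
proof (induction N)
  case 0
  then show ?case by simp
next
  case (Suc N)
  have L: "(\<Sum>j<Suc N. \<Sum>k<Suc N. F (int j - int k)) =
      (\<Sum>j<N. \<Sum>k<N. F (int j - int k)) + ((\<Sum>k<N. F (int N - int k)) + (\<Sum>j<N. F (int j - int N)) + F 0)"
    by (simp add: sum.distrib algebra_simps)
  have "{-int (Suc N)..int (Suc N)} = insert (-int (Suc N)) (insert (int (Suc N)) {-int N..int N})"
    by auto
  then have "(\<Sum>h\<in>{-int (Suc N)..int (Suc N)}. of_int (int (Suc N) - \<bar>h\<bar>) * F h) =
      (\<Sum>h\<in>{-int N..int N}. of_int (int (Suc N) - \<bar>h\<bar>) * F h)"
    by simp
  also have "\<dots> = (\<Sum>h\<in>{-int N..int N}. of_int (int N - \<bar>h\<bar>) * F h) + (\<Sum>h\<in>{-int N..int N}. F h)"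
    by (simp add: sum.distrib[symmetric] algebra_simps)
  finally show ?case
    unfolding L Suc.IH sum_symmetric_interval_split[of F N] by (simp only: add_ac)
qed

definition fejer_kernel :: "nat \<Rightarrow> real \<Rightarrow> real" where
  "fejer_kernel N x = (norm (\<Sum>k<N. e (of_real x) ^ k))\<^sup>2 / real N"

lemma fejer_kernel_nonneg: "fejer_kernel N x \<ge> 0"
  by (simp add: fejer_kernel_def)

lemma continuous_on_fejer_kernel [continuous_intros]:
  "continuous_on A f \<Longrightarrow> continuous_on A (\<lambda>x. fejer_kernel N (f x))"
  unfolding fejer_kernel_def divide_inverse by (intro continuous_intros)

lemma fejer_kernel_expansion:
  assumes "N > 0"
  shows "of_real (fejer_kernel N x) =
    (\<Sum>h\<in>{-int N..int N}. of_real (1 - of_int \<bar>h\<bar> / real N) * e (of_int h * of_real x))"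
proof -
  define z where "z = e (of_real x)"
  define F where "F h = e (of_int h * of_real x)" for h :: int
  have z_pow_cnj: "z ^ j * cnj z ^ k = F (int j - int k)" for j k
  proof -
    have "z ^ j * cnj z ^ k = e (of_nat j * of_real x) * e (of_nat k * (- of_real x))"
      by (simp only: e_of_nat_mult cnj_e_of_real z_def)
    also have "\<dots> = F (int j - int k)"
      unfolding F_def e_add[symmetric] by (simp add: algebra_simps)
    finally show ?thesis .
  qed
  have "of_real ((norm (\<Sum>k<N. z ^ k))\<^sup>2) = (\<Sum>k<N. z ^ k) * cnj (\<Sum>k<N. z ^ k)"
    by (rule complex_norm_square)
  also have "\<dots> = (\<Sum>j<N. \<Sum>k<N. z ^ j * cnj z ^ k)"
    by (simp only: cnj_sum sum_product complex_cnj_power)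
  also have "\<dots> = (\<Sum>h\<in>{-int N..int N}. of_int (int N - \<bar>h\<bar>) * F h)"
    unfolding z_pow_cnj by (rule double_sum_of_diff)
  finally have "of_real (fejer_kernel N x) = (\<Sum>h\<in>{-int N..int N}. of_int (int N - \<bar>h\<bar>) * F h) / of_nat N"
    unfolding fejer_kernel_def z_def[symmetric] by simp
  also have "\<dots> = (\<Sum>h\<in>{-int N..int N}. of_real (1 - of_int \<bar>h\<bar> / real N) * F h)"
  proof -
    have "(of_real (1 - of_int \<bar>h\<bar> / real N) :: complex) = of_int (int N - \<bar>h\<bar>) / of_nat N" for h
      using assms by (simp add: field_simps) (metis of_int_abs of_real_of_int_eq)
    then show ?thesis by (simp add: sum_divide_distrib)
  qed
  finally show ?thesis unfolding F_def .
qed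

lemma cos_le_cos_away_from_integers:
  assumes "0 < d" "d \<le> 1/2" "d \<le> \<bar>x\<bar>" "\<bar>x\<bar> \<le> 1 - d"
  shows "cos (2 * pi * x) \<le> cos (2 * pi * d)"
proof -
  have c: "cos (2 * pi * x) = cos (2 * pi * \<bar>x\<bar>)"
    by (cases "x \<ge> 0") auto
  show ?thesis
  proof (cases "\<bar>x\<bar> \<le> 1/2")
    case True
    then show ?thesis unfolding c by (intro cos_monotone_0_pi_le) (use assms in auto)
  next
    case False
    have "cos (2 * pi * (1 - \<bar>x\<bar>)) = cos (2 * pi - 2 * pi * \<bar>x\<bar>)"
      by (simp add: algebra_simps)
    then have "cos (2 * pi * \<bar>x\<bar>) = cos (2 * pi * (1 - \<bar>x\<bar>))"
      by (simp add: cos_diff)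
    then show ?thesis unfolding c using False assms by (auto intro!: cos_monotone_0_pi_le)
  qed
qed

lemma cos_two_pi_less_1:
  assumes "0 < d" "d \<le> 1/2"
  shows "cos (2 * pi * d) < 1"
  using cos_monotone_0_pi[of 0 "2 * pi * d"] assms by auto

lemma fejer_kernel_tail_bound:
  assumes "0 < d" "d \<le> 1/2" "d \<le> \<bar>x\<bar>" "\<bar>x\<bar> \<le> 1 - d" "N > 0"
  shows "fejer_kernel N x \<le> 4 / (2 - 2 * cos (2 * pi * d)) / real N"
proof -
  define z where "z = e (of_real x)"
  have pos: "2 - 2 * cos (2 * pi * d) > 0"
    using cos_two_pi_less_1[OF assms(1,2)] by simp
  have le: "2 - 2 * cos (2 * pi * d) \<le> (norm (z - 1))\<^sup>2"
    using cos_le_cos_away_from_integers[OF assms(1-4)] by (simp add: z_def norm_e_of_real_minus_1_sq)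
  then have z1: "z \<noteq> 1" using pos by auto
  have "norm (\<Sum>k<N. z ^ k) = norm (1 - z ^ N) / norm (z - 1)"
    using z1 by (simp add: sum_gp_strict norm_divide norm_minus_commute)
  also have "\<dots> \<le> 2 / norm (z - 1)"
  proof -
    have "norm (1 - z ^ N) \<le> norm (1::complex) + norm (z ^ N)" by (rule norm_triangle_ineq4)
    then have "norm (1 - z ^ N) \<le> 2" by (simp add: norm_power z_def)
    then show ?thesis using z1 by (simp add: divide_right_mono)
  qed
  finally have "(norm (\<Sum>k<N. z ^ k))\<^sup>2 \<le> (2 / norm (z - 1))\<^sup>2"
    by (rule power_mono) simp
  also have "\<dots> = 4 / (norm (z - 1))\<^sup>2" by (simp add: power_divide)
  also have "\<dots> \<le> 4 / (2 - 2 * cos (2 * pi * d))"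
    using le pos z1 by (intro divide_left_mono) auto
  finally show ?thesis
    unfolding fejer_kernel_def z_def[symmetric] by (rule divide_right_mono) simp
qed

lemma has_integral_fejer_kernel_complex:
  assumes "N > 0"
  shows "((\<lambda>s. of_real (fejer_kernel N (t - s)) :: complex) has_integral 1) {0..1}"
proof -
  have split: "e (of_int h * of_real (t - s)) = e (of_int h * of_real t) * e (of_int (- h) * of_real s)"
    for h s by (simp add: e_add[symmetric] algebra_simps)
  have "((\<lambda>s. \<Sum>h\<in>{-int N..int N}. of_real (1 - of_int \<bar>h\<bar> / real N) * e (of_int h * of_real t) *
            e (of_int (- h) * of_real s))
       has_integral (\<Sum>h\<in>{-int N..int N}. of_real (1 - of_int \<bar>h\<bar> / real N) * e (of_int h * of_real t) *
            (if - h = 0 then 1 else 0))) {0..1}"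
    by (intro has_integral_sum finite_atLeastAtMost_int has_integral_mult_right has_integral_e)
  moreover have "(\<Sum>h\<in>{-int N..int N}. of_real (1 - of_int \<bar>h\<bar> / real N) * e (of_int h * of_real t) *
      (if - h = 0 then 1 else 0)) = (1::complex)"
    by (simp add: if_distrib cong: if_cong)
  ultimately show ?thesis
    unfolding fejer_kernel_expansion[OF assms] split by (simp add: ac_simps)
qed

lemma integral_fejer_kernel:
  assumes "N > 0"
  shows "integral {0..1} (\<lambda>s. fejer_kernel N (t - s)) = 1"
  using has_integral_linear[OF has_integral_fejer_kernel_complex[OF assms] bounded_linear_Re]
  by (simp add: o_def integral_unique)

definition fejer_mean :: "(real \<Rightarrow> complex) \<Rightarrow> nat \<Rightarrow> real \<Rightarrow> complex" where
  "fejer_mean g N t =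
     (\<Sum>h\<in>{-int N..int N}. of_real (1 - of_int \<bar>h\<bar> / real N) * fourier_coeff g h * e (of_int h * of_real t))"

lemma fejer_mean_eq_convolution:
  assumes g: "continuous_on {0..1} g" and N: "N > 0"
  shows "fejer_mean g N t = integral {0..1} (\<lambda>s. g s * of_real (fejer_kernel N (t - s)))"
proof -
  define w where "w h = (of_real (1 - of_int \<bar>h\<bar> / real N) :: complex)" for h :: int
  have split: "e (of_int h * of_real (t - s)) = e (of_int h * of_real t) * e (- (of_int h * of_real s))"
    for h s by (simp add: e_add[symmetric] algebra_simps)
  have "integral {0..1} (\<lambda>s. g s * of_real (fejer_kernel N (t - s))) =
     integral {0..1} (\<lambda>s. \<Sum>h\<in>{-int N..int N}. w h * e (of_int h * of_real t) * (g s * e (- (of_int h * of_real s))))"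
    unfolding fejer_kernel_expansion[OF N] split w_def by (simp add: sum_distrib_left ac_simps)
  also have "\<dots> = (\<Sum>h\<in>{-int N..int N}. w h * e (of_int h * of_real t) * fourier_coeff g h)"
    unfolding fourier_coeff_def
    by (subst integral_sum) (auto intro!: integrable_continuous_interval continuous_intros g)
  finally show ?thesis
    unfolding fejer_mean_def w_def by (simp add: ac_simps)
qed

lemma uniformly_continuous_periodic_Icc:
  fixes g :: "real \<Rightarrow> 'a::metric_space"
  assumes g: "continuous_on {0..1} g" and g01: "g 0 = g 1" and \<epsilon>: "\<epsilon> > 0"
  obtains \<delta> where "0 < \<delta>" "\<delta> \<le> 1/2"
    "\<And>s t. s \<in> {0..1} \<Longrightarrow> t \<in> {0..1} \<Longrightarrow> \<bar>t - s\<bar> < \<delta> \<or> \<bar>t - s\<bar> > 1 - \<delta> \<Longrightarrow>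
       dist (g s) (g t) < \<epsilon>"
proof -
  have "uniformly_continuous_on {0..1} g"
    by (rule compact_uniformly_continuous[OF g compact_Icc])
  then obtain d where d: "d > 0"
    "\<And>x x'. x \<in> {0..1} \<Longrightarrow> x' \<in> {0..1} \<Longrightarrow> dist x' x < d \<Longrightarrow> dist (g x') (g x) < \<epsilon>/2"
    unfolding uniformly_continuous_on_def using \<epsilon> by (metis half_gt_zero)
  define \<delta> where "\<delta> = min d (1/2)"
  show ?thesis
  proof (rule that)
    show "0 < \<delta>" "\<delta> \<le> 1/2" using d by (auto simp: \<delta>_def)
    fix s t assume s: "s \<in> {0..1}" and t: "t \<in> {0..1}"
      and st: "\<bar>t - s\<bar> < \<delta> \<or> \<bar>t - s\<bar> > 1 - \<delta>"
    consider "\<bar>t - s\<bar> < \<delta>" | "\<bar>t - s\<bar> > 1 - \<delta>" "s \<le> t" | "\<bar>t - s\<bar> > 1 - \<delta>" "t \<le> s"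
      using st by linarith
    then show "dist (g s) (g t) < \<epsilon>"
    proof cases
      case 1
      then show ?thesis using d(2)[OF t s] \<epsilon> by (simp add: dist_real_def \<delta>_def abs_minus_commute)
    next
      case 2
      \<comment> \<open>s is close to 0 and t is close to 1, and g 0 = g 1\<close>
      then have "dist (g s) (g 0) < \<epsilon>/2" "dist (g 1) (g t) < \<epsilon>/2"
        using d(2)[of 0 s] d(2)[of t 1] s t by (auto simp: dist_real_def \<delta>_def)
      then show ?thesis using dist_triangle_half_l[of "g s" "g 0" \<epsilon> "g t"] g01
        by (simp add: dist_commute)
    next
      case 3
      then have "dist (g s) (g 1) < \<epsilon>/2" "dist (g 0) (g t) < \<epsilon>/2"
        using d(2)[of 1 s] d(2)[of t 0] s t by (auto simp: dist_real_def \<delta>_def)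
      then show ?thesis using dist_triangle_half_l[of "g s" "g 1" \<epsilon> "g t"] g01
        by (simp add: dist_commute)
    qed
  qed
qed

lemma fejer_mean_minus_eq_integral:
  assumes g: "continuous_on {0..1} g" and N: "N > 0"
  shows "fejer_mean g N t - g t = integral {0..1} (\<lambda>s. (g s - g t) * of_real (fejer_kernel N (t - s)))"
proof -
  have "integral {0..1} (\<lambda>s. g t * of_real (fejer_kernel N (t - s))) = g t"
    using has_integral_fejer_kernel_complex[OF N, of t]
    by (simp add: integral_mult_right integral_unique)
  then show ?thesis
    unfolding fejer_mean_eq_convolution[OF g N] left_diff_distrib
    by (subst integral_diff) (auto intro!: integrable_continuous_interval continuous_intros g)
qed

lemma fejer_mean_error_bound:
  fixes g :: "real \<Rightarrow> complex"
  assumes g: "continuous_on {0..1} g" and N: "N > 0" and t: "t \<in> {0..1}"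
    and \<delta>: "0 < \<delta>" "\<delta> \<le> 1/2"
    and M: "\<And>s. s \<in> {0..1} \<Longrightarrow> norm (g s) \<le> M"
    and near: "\<And>s. s \<in> {0..1} \<Longrightarrow> \<bar>t - s\<bar> < \<delta> \<or> \<bar>t - s\<bar> > 1 - \<delta> \<Longrightarrow> norm (g s - g t) \<le> \<eta>"
  shows "norm (fejer_mean g N t - g t) \<le> \<eta> + 2 * M * (4 / (2 - 2 * cos (2 * pi * \<delta>))) / real N"
proof -
  define K where "K = (\<lambda>s. fejer_kernel N (t - s))"
  define B where "B = 2 * M * (4 / (2 - 2 * cos (2 * pi * \<delta>))) / real N"
  have K_nonneg: "K s \<ge> 0" for s by (simp add: K_def fejer_kernel_nonneg)
  have \<eta>: "\<eta> \<ge> 0" using near[OF t] \<delta> by simp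
  have "M \<ge> 0" using M[OF t] norm_ge_zero order_trans by blast
  then have B: "B \<ge> 0"
    using cos_two_pi_less_1[OF \<delta>] by (simp add: B_def)
  have conv: "fejer_mean g N t - g t = integral {0..1} (\<lambda>s. (g s - g t) * of_real (K s))"
    unfolding K_def by (rule fejer_mean_minus_eq_integral[OF g N])
  have pointwise: "norm ((g s - g t) * of_real (K s)) \<le> \<eta> * K s + B" if s: "s \<in> {0..1}" for s
  proof (cases "\<bar>t - s\<bar> < \<delta> \<or> \<bar>t - s\<bar> > 1 - \<delta>")
    case True
    then have "norm (g s - g t) * K s \<le> \<eta> * K s"
      using near[OF s] K_nonneg by (intro mult_right_mono)
    then show ?thesis using K_nonneg B by (simp add: norm_mult)
  next
    case False
    then have "K s \<le> 4 / (2 - 2 * cos (2 * pi * \<delta>)) / real N"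
      unfolding K_def by (intro fejer_kernel_tail_bound \<delta> N) auto
    moreover have "norm (g s - g t) \<le> 2 * M"
      using norm_triangle_ineq4[of "g s" "g t"] M[OF s] M[OF t] by simp
    ultimately have "norm (g s - g t) * K s \<le> B"
      unfolding B_def using K_nonneg \<open>M \<ge> 0\<close>
      by (simp add: mult_mono times_divide_eq_right[symmetric] del: times_divide_eq_right)
    then show ?thesis using K_nonneg \<eta> by (simp add: norm_mult add_increasing)
  qed
  have "norm (fejer_mean g N t - g t) \<le> integral {0..1} (\<lambda>s. \<eta> * K s + B)"
    unfolding conv using pointwise
    by (intro integral_norm_bound_integral)
       (auto intro!: integrable_continuous_interval continuous_intros g simp: K_def)
  also have "\<dots> = \<eta> * integral {0..1} K + B"
    by (subst integral_add) (auto intro!: integrable_continuous_interval continuous_intros simp: K_def)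
  also have "\<dots> = \<eta> + B"
    using integral_fejer_kernel[OF N, of t] by (simp add: K_def)
  finally show ?thesis unfolding B_def .
qed

theorem fejer_uniform_limit:
  fixes g :: "real \<Rightarrow> complex"
  assumes g: "continuous_on {0..1} g" and g01: "g 0 = g 1"
  shows "uniform_limit {0..1} (fejer_mean g) g sequentially"
proof (rule uniform_limitI)
  fix \<epsilon> :: real assume \<epsilon>: "0 < \<epsilon>"
  have "bounded (g ` {0..1})"
    by (intro compact_imp_bounded compact_continuous_image g compact_Icc)
  then obtain M where M: "\<And>s. s \<in> {0..1} \<Longrightarrow> norm (g s) \<le> M"
    unfolding bounded_iff by fastforce
  obtain \<delta> where \<delta>: "0 < \<delta>" "\<delta> \<le> 1/2"
    and near: "\<And>s t. s \<in> {0..1} \<Longrightarrow> t \<in> {0..1} \<Longrightarrow> \<bar>t - s\<bar> < \<delta> \<or> \<bar>t - s\<bar> > 1 - \<delta> \<Longrightarrow>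
      dist (g s) (g t) < \<epsilon>/2"
    using uniformly_continuous_periodic_Icc[OF g g01, of "\<epsilon>/2"] \<epsilon> by auto
  define B where "B = 2 * M * (4 / (2 - 2 * cos (2 * pi * \<delta>)))"
  have "\<forall>\<^sub>F N in sequentially. B / real N < \<epsilon>/2"
    using \<epsilon> by (intro order_tendstoD(2)[OF lim_const_over_n]) simp
  moreover have "\<forall>\<^sub>F N in sequentially. N > (0::nat)"
    by (simp add: eventually_gt_at_top)
  ultimately show "\<forall>\<^sub>F N in sequentially. \<forall>t\<in>{0..1}. dist (fejer_mean g N t) (g t) < \<epsilon>"
  proof eventually_elim
    case (elim N)
    show ?case
    proof
      fix t :: real assume t: "t \<in> {0..1}"
      have "norm (fejer_mean g N t - g t) \<le> \<epsilon>/2 + B / real N"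
        unfolding B_def using near[of _ t] t
        by (intro fejer_mean_error_bound g elim(2) t \<delta> M) (auto simp: dist_norm less_imp_le)
      then show "dist (fejer_mean g N t) (g t) < \<epsilon>"
        using elim(1) by (simp add: dist_norm field_simps)
    qed
  qed
qed

lemma fourier_coeff_minus_linear:
  fixes f :: "real \<Rightarrow> complex"
  assumes f: "continuous_on {0..1} f" and h: "h \<noteq> 0"
  shows "fourier_coeff (\<lambda>t. f t - of_real t * c) h = fourier_coeff f h + c / (2 * \<i> * of_real pi * of_int h)"
proof -
  have "integral {0..1} (\<lambda>t. of_real t * e (- (of_int h * of_real t))) = 1 / (2 * of_real pi * \<i> * of_int (- h))"
    using has_integral_of_real_mult_e[of "- h"] h by (simp add: integral_unique)
  then have lin: "integral {0..1} (\<lambda>t. c * (of_real t * e (- (of_int h * of_real t)))) =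
      - c / (2 * \<i> * of_real pi * of_int h)"
    by (simp add: field_simps)
  have "fourier_coeff (\<lambda>t. f t - of_real t * c) h =
      integral {0..1} (\<lambda>t. f t * e (- (of_int h * of_real t)) - c * (of_real t * e (- (of_int h * of_real t))))"
    unfolding fourier_coeff_def by (simp add: algebra_simps)
  also have "\<dots> = fourier_coeff f h - integral {0..1} (\<lambda>t. c * (of_real t * e (- (of_int h * of_real t))))"
    unfolding fourier_coeff_def
    by (rule integral_diff) (auto intro!: integrable_continuous_interval continuous_intros f)
  finally show ?thesis unfolding lin by simp
qed

lemma F0D:
  assumes "f \<in> F0"
  shows "continuous_on {0..1} f" and "f 0 = 0" and "cnj (f 1) = f 1"
    and "t \<in> {0..1} \<Longrightarrow> f t = f 1 - cnj (f (1 - t))"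
proof -
  have sym: "\<And>t. t \<in> {0..1} \<Longrightarrow> f t + cnj (f (1 - t)) = f 1"
    using assms by (auto simp: F0_def)
  show "continuous_on {0..1} f" using assms by (simp add: F0_def)
  from sym[of 1] have "cnj (f 0) = 0" by simp
  then show f0: "f 0 = 0" by simp
  from sym[of 0] f0 show "cnj (f 1) = f 1" by simp
  show "t \<in> {0..1} \<Longrightarrow> f t = f 1 - cnj (f (1 - t))"
    using sym by (metis add_diff_cancel_right')
qed

lemma integral_reflect_01:
  fixes \<phi> :: "real \<Rightarrow> 'a::banach"
  shows "integral {0..1} (\<lambda>t. \<phi> (1 - t)) = integral {0..1} \<phi>"
proof -
  have "integral {0..1} (\<lambda>t. \<phi> (1 - t)) = integral {-0..-(-1)} (\<lambda>x. (\<phi> \<circ> (+) 1) (-x))"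
    by (simp add: o_def)
  also have "\<dots> = integral {-1..0} (\<phi> \<circ> (+) 1)"
    by (rule Henstock_Kurzweil_Integration.integral_reflect_real)
  also have "\<dots> = integral {-1+1..0+1} \<phi>"
    by (rule integral_shift_Icc_real)
  finally show ?thesis by simp
qed

lemma fourier_coeff_F0_imaginary:
  assumes F: "f \<in> F0" and h: "h \<noteq> 0"
  shows "cnj (fourier_coeff f h) = - fourier_coeff f h"
proof -
  define E where "E t = e (- (of_int h * of_real t))" for t
  have cnj_E_reflect: "E (1 - s) = cnj (E s)" for s
  proof -
    have "E (1 - s) = e (of_int h * of_real s) * e (of_int (- h))"
      unfolding E_def e_add[symmetric] by (simp add: algebra_simps)
    then show ?thesis using e_of_int[of "- h"] by (simp add: E_def cnj_e_minus)
  qed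
  have f_reflect: "continuous_on {0..1} (\<lambda>t. f (1 - t))"
    by (rule continuous_on_compose2[OF F0D(1)[OF F]]) (auto intro!: continuous_intros)
  have "fourier_coeff f h = integral {0..1} (\<lambda>t. f 1 * E t - cnj (f (1 - t)) * E t)"
    unfolding fourier_coeff_def E_def[symmetric] left_diff_distrib[symmetric]
    by (intro integral_cong) (simp only: F0D(4)[OF F])
  also have "\<dots> = integral {0..1} (\<lambda>t. f 1 * E t) - integral {0..1} (\<lambda>t. cnj (f (1 - t)) * E t)"
    unfolding E_def
    by (rule integral_diff) (auto intro!: integrable_continuous_interval continuous_intros f_reflect)
  also have "integral {0..1} (\<lambda>t. f 1 * E t) = 0"
    using has_integral_e[of "- h"] h by (simp add: E_def integral_unique)
  also have "integral {0..1} (\<lambda>t. cnj (f (1 - t)) * E t) = integral {0..1} (\<lambda>t. cnj (f t) * E (1 - t))"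
    using integral_reflect_01[of "\<lambda>t. cnj (f t) * E (1 - t)"] by simp
  also have "\<dots> = cnj (fourier_coeff f h)"
    unfolding cnj_E_reflect by (simp add: fourier_coeff_def E_def integral_cnj)
  finally show ?thesis by (metis add_diff_cancel_left' complex_cnj_cnj complex_cnj_minus diff_0)
qed

lemma expansion_coeffs_exist:
  assumes "f \<in> F0"
  shows "\<exists>\<alpha>. expansion_coeffs f \<alpha>"
proof -
  define c where "c h = (if h = 0 then f 1 else f 1 + 2 * \<i> * of_real pi * of_int h * fourier_coeff f h)"
    for h :: int
  have "cnj (c h) = c h" for h
    using F0D(3)[OF assms] fourier_coeff_F0_imaginary[OF assms, of h] by (simp add: c_def)
  then have c_real: "complex_of_real (Re (c h)) = c h" for h
    by (simp add: Reals_cnj_iff)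
  have "expansion_coeffs f (\<lambda>h. Re (c h))"
    unfolding expansion_coeffs_def c_real by (simp add: c_def)
  then show ?thesis by blast
qed

lemma fejer_partial_at_1: "fejer_partial \<alpha> N 1 = of_real (\<alpha> 0)"
  unfolding fejer_partial_def using e_of_int by simp

lemma fejer_partial_reflect:
  "fejer_partial \<alpha> N t + cnj (fejer_partial \<alpha> N (1 - t)) = of_real (\<alpha> 0)"
proof -
  define W where "W h = (1 - of_int \<bar>h\<bar> / real N :: real)" for h :: int
  define T where "T h t = of_real (\<alpha> h) * (e (of_int h * of_real t) - 1) / (2 * \<i> * of_real pi * of_int h) * of_real (W h)"
    for h :: int and t :: real
  have cnj_e: "cnj (e (of_int h - of_int h * of_real t)) = e (of_int h * of_real t)" for h
    using cnj_e_reflect[of h t] by (simp add: algebra_simps)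
  \<comment> \<open>each term is anti-invariant under t \<mapsto> 1 - t followed by conjugation, because \<alpha> h is real\<close>
  have "T h t + cnj (T h (1 - t)) = 0" for h
    unfolding T_def by (simp add: cnj_e cnj_e_reflect field_simps)
  then have "(\<Sum>h\<in>{-int N..int N} - {0}. T h t) + cnj (\<Sum>h\<in>{-int N..int N} - {0}. T h (1 - t)) = 0"
    unfolding cnj_sum sum.distrib[symmetric] by simp
  then show ?thesis
    unfolding fejer_partial_def T_def W_def by (simp add: algebra_simps)
qed

lemma has_expansion_imp_F0:
  assumes f: "continuous_on {0..1} f" and E: "has_expansion \<alpha> f"
  shows "f \<in> F0"
proof -
  have U: "uniform_limit {0..1} (fejer_partial \<alpha>) f sequentially"
    using E unfolding has_expansion_def .
  have "f t + cnj (f (1 - t)) = f 1" if t: "t \<in> {0..1}" for t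
  proof -
    have "(\<lambda>N. fejer_partial \<alpha> N t + cnj (fejer_partial \<alpha> N (1 - t))) \<longlonglongrightarrow> f t + cnj (f (1 - t))"
      using t by (intro tendsto_intros tendsto_uniform_limitI[OF U]) auto
    moreover have "(\<lambda>N. fejer_partial \<alpha> N 1) \<longlonglongrightarrow> f 1"
      by (intro tendsto_uniform_limitI[OF U]) simp
    ultimately show ?thesis
      unfolding fejer_partial_reflect fejer_partial_at_1 by (rule LIMSEQ_unique)
  qed
  then show ?thesis using f by (simp add: F0_def)
qed

lemma fejer_partial_eq_fejer_mean:
  fixes f :: "real \<Rightarrow> complex"
  assumes f: "continuous_on {0..1} f" and C: "expansion_coeffs f \<alpha>"
  defines "g \<equiv> \<lambda>t. f t - of_real t * f 1"
  shows "fejer_partial \<alpha> N t = f 1 * of_real t + (fejer_mean g N t - fejer_mean g N 0)"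
proof -
  define H where "H = {-int N..int N}"
  define W where "W h = (of_real (1 - of_int \<bar>h\<bar> / real N) :: complex)" for h :: int
  have g_coeff: "fourier_coeff g h = of_real (\<alpha> h) / (2 * \<i> * of_real pi * of_int h)" if "h \<noteq> 0" for h
    using fourier_coeff_minus_linear[OF f that, of "f 1"] C that
    unfolding g_def expansion_coeffs_def by (simp add: field_simps)
  have "fejer_mean g N t - fejer_mean g N 0 =
      (\<Sum>h\<in>H. W h * fourier_coeff g h * (e (of_int h * of_real t) - 1))"
    unfolding fejer_mean_def H_def[symmetric] W_def[symmetric]
    by (simp add: sum_subtractf[symmetric] algebra_simps)
  also have "\<dots> = (\<Sum>h\<in>H - {0}. W h * fourier_coeff g h * (e (of_int h * of_real t) - 1))"
    by (rule sum.mono_neutral_right) (auto simp: H_def)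
  also have "\<dots> = (\<Sum>h\<in>H - {0}. of_real (\<alpha> h) * (e (of_int h * of_real t) - 1) /
      (2 * \<i> * of_real pi * of_int h) * W h)"
    by (rule sum.cong) (auto simp: g_coeff)
  finally show ?thesis
    using C unfolding fejer_partial_def expansion_coeffs_def H_def W_def by simp
qed

lemma expansion_coeffs_imp_has_expansion:
  fixes f :: "real \<Rightarrow> complex"
  assumes f: "continuous_on {0..1} f" and f0: "f 0 = 0" and C: "expansion_coeffs f \<alpha>"
  shows "has_expansion \<alpha> f"
proof -
  define g where "g t = f t - of_real t * f 1" for t
  have g: "continuous_on {0..1} g" unfolding g_def by (intro continuous_intros f)
  have g0: "g 0 = 0" "g 1 = 0" by (simp_all add: g_def f0)
  have U: "uniform_limit {0..1} (fejer_mean g) g sequentially"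
    using fejer_uniform_limit[OF g] g0 by simp
  have U0: "uniform_limit {0..1} (\<lambda>N t. fejer_mean g N 0) (\<lambda>t. g 0) sequentially"
  proof (rule uniform_limitI)
    fix \<epsilon> :: real assume "\<epsilon> > 0"
    then show "\<forall>\<^sub>F N in sequentially. \<forall>t\<in>{0..1}. dist (fejer_mean g N 0) (g 0) < \<epsilon>"
      by (rule eventually_mono[OF uniform_limitD[OF U]]) simp
  qed
  have "uniform_limit {0..1} (\<lambda>N t. f 1 * of_real t + (fejer_mean g N t - fejer_mean g N 0))
      (\<lambda>t. f 1 * of_real t + (g t - g 0)) sequentially"
    by (intro uniform_limit_intros U U0)
  moreover have "f 1 * of_real t + (g t - g 0) = f t" for t
    by (simp add: g_def f0)
  ultimately show ?thesis
    unfolding has_expansion_def fejer_partial_eq_fejer_mean[OF f C] g_def by simp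
qed

lemma tendsto_integral_mult_uniform_limit:
  fixes F :: "nat \<Rightarrow> real \<Rightarrow> 'a::{real_normed_algebra,banach}"
  assumes U: "uniform_limit {a..b} F f sequentially"
    and F: "\<And>n. continuous_on {a..b} (F n)" and f: "continuous_on {a..b} f"
    and E: "continuous_on {a..b} E"
  shows "(\<lambda>n. integral {a..b} (\<lambda>t. F n t * E t)) \<longlonglongrightarrow> integral {a..b} (\<lambda>t. f t * E t)"
proof -
  have bounded: "bounded (f ` {a..b})" "bounded (E ` {a..b})"
    by (intro compact_imp_bounded compact_continuous_image f E compact_Icc)+
  have "uniform_limit {a..b} (\<lambda>n t. F n t * E t) (\<lambda>t. f t * E t) sequentially"
    by (intro uniform_lim_mult U uniform_limit_const bounded)
  then obtain I J where I: "\<And>n. ((\<lambda>t. F n t * E t) has_integral I n) {a..b}"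
    and J: "((\<lambda>t. f t * E t) has_integral J) {a..b}" and "I \<longlonglongrightarrow> J"
    by (rule uniform_limit_integral) (auto intro!: continuous_intros F E)
  moreover have "I = (\<lambda>n. integral {a..b} (\<lambda>t. F n t * E t))"
    using I by (intro ext) (metis integral_unique)
  ultimately show ?thesis using J by (simp add: integral_unique)
qed

lemma integral_fejer_partial_mult_e:
  assumes k: "k \<noteq> 0" and N: "nat \<bar>k\<bar> \<le> N"
  shows "integral {0..1} (\<lambda>t. fejer_partial \<alpha> N t * e (of_int (- k) * of_real t)) =
    of_real (\<alpha> 0) / (2 * of_real pi * \<i> * of_int (- k)) +
    of_real (\<alpha> k) / (2 * \<i> * of_real pi * of_int k) * of_real (1 - of_int \<bar>k\<bar> / real N)"
proof -
  define H where "H = {-int N..int N} - {0}"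
  define b where "b h = of_real (\<alpha> h) / (2 * \<i> * of_real pi * of_int h) * of_real (1 - of_int \<bar>h\<bar> / real N)"
    for h
  define E where "E t = e (of_int (- k) * of_real t)" for t
  have expand: "fejer_partial \<alpha> N t * E t =
      of_real (\<alpha> 0) * (of_real t * E t) + (\<Sum>h\<in>H. b h * (e (of_int (h - k) * of_real t) - E t))" for t
  proof -
    have shift: "e (of_int h * of_real t) * E t = e (of_int (h - k) * of_real t)" for h
      unfolding E_def e_add[symmetric] by (simp add: algebra_simps)
    have regroup: "(x::complex) * (y - 1) / d * w * z = x / d * w * (y * z - z)" for x y d w z
      by (simp add: divide_inverse algebra_simps)
    have "fejer_partial \<alpha> N t * E t = of_real (\<alpha> 0) * (of_real t * E t) +
        (\<Sum>h\<in>H. of_real (\<alpha> h) * (e (of_int h * of_real t) - 1) / (2 * \<i> * of_real pi * of_int h) *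
          of_real (1 - of_int \<bar>h\<bar> / real N) * E t)"
      unfolding fejer_partial_def H_def[symmetric] by (simp add: distrib_right sum_distrib_right mult.assoc)
    then show ?thesis unfolding regroup shift b_def .
  qed
  \<comment> \<open>only the term h = k survives the integration\<close>
  have "((\<lambda>t. fejer_partial \<alpha> N t * E t) has_integral
      (of_real (\<alpha> 0) * (1 / (2 * of_real pi * \<i> * of_int (- k))) +
       (\<Sum>h\<in>H. b h * ((if h - k = 0 then 1 else 0) - (if - k = 0 then 1 else 0))))) {0..1}"
    unfolding expand unfolding E_def
    by (intro has_integral_add has_integral_mult_right has_integral_sum has_integral_diff
        has_integral_e has_integral_of_real_mult_e) (auto simp: H_def k)
  moreover have "(\<Sum>h\<in>H. b h * ((if h - k = 0 then 1 else 0) - (if - k = 0 then 1 else 0))) = b k"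
  proof -
    have "(\<Sum>h\<in>H. b h * ((if h - k = 0 then 1 else 0) - (if - k = 0 then 1 else 0))) =
        (\<Sum>h\<in>H. if h = k then b h else 0)"
      using k by (intro sum.cong) auto
    also have "\<dots> = b k" using k N by (simp add: H_def) linarith
    finally show ?thesis .
  qed
  ultimately show ?thesis unfolding E_def b_def by (simp only: integral_unique) simp
qed

lemma has_expansion_at_1:
  assumes "has_expansion \<alpha> f"
  shows "f 1 = of_real (\<alpha> 0)"
proof -
  have "(\<lambda>N. fejer_partial \<alpha> N 1) \<longlonglongrightarrow> f 1"
    using assms unfolding has_expansion_def by (rule tendsto_uniform_limitI) simp
  then show ?thesis
    unfolding fejer_partial_at_1 using LIMSEQ_unique[OF _ tendsto_const] by blast
qed

lemma has_expansion_fourier_coeff: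
  fixes f :: "real \<Rightarrow> complex"
  assumes f: "continuous_on {0..1} f" and E: "has_expansion \<alpha> f" and k: "k \<noteq> 0"
  shows "fourier_coeff f k = (of_real (\<alpha> k) - of_real (\<alpha> 0)) / (2 * \<i> * of_real pi * of_int k)"
proof -
  define c where "c = (2 * \<i> * of_real pi * of_int k :: complex)"
  define L where "L N = of_real (\<alpha> 0) / (2 * of_real pi * \<i> * of_int (- k)) +
    of_real (\<alpha> k) / c * of_real (1 - of_int \<bar>k\<bar> / real N)" for N
  have "fourier_coeff f k = integral {0..1} (\<lambda>t. f t * e (of_int (- k) * of_real t))"
    by (simp add: fourier_coeff_def)
  moreover have "continuous_on {0..1} (fejer_partial \<alpha> N)" for N
    unfolding fejer_partial_def by (intro continuous_intros) auto
  ultimately have "(\<lambda>N. integral {0..1} (\<lambda>t. fejer_partial \<alpha> N t * e (of_int (- k) * of_real t)))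
      \<longlonglongrightarrow> fourier_coeff f k"
    using E unfolding has_expansion_def
    by (simp only:) (intro tendsto_integral_mult_uniform_limit f continuous_intros)
  moreover have "\<forall>\<^sub>F N in sequentially.
      integral {0..1} (\<lambda>t. fejer_partial \<alpha> N t * e (of_int (- k) * of_real t)) = L N"
    unfolding eventually_sequentially L_def c_def using integral_fejer_partial_mult_e[OF k] by blast
  ultimately have "L \<longlonglongrightarrow> fourier_coeff f k"
    by (rule Lim_transform_eventually)
  moreover have "L \<longlonglongrightarrow> of_real (\<alpha> 0) / (2 * of_real pi * \<i> * of_int (- k)) + of_real (\<alpha> k) / c * of_real (1 - 0)"
    unfolding L_def by (intro tendsto_intros)
  ultimately have "fourier_coeff f k = of_real (\<alpha> 0) / (2 * of_real pi * \<i> * of_int (- k)) + of_real (\<alpha> k) / c"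
    using LIMSEQ_unique by fastforce
  also have "\<dots> = (of_real (\<alpha> k) - of_real (\<alpha> 0)) / c"
    using k unfolding c_def by (simp add: field_simps)
  finally show ?thesis unfolding c_def .
qed

lemma has_expansion_imp_expansion_coeffs:
  fixes f :: "real \<Rightarrow> complex"
  assumes f: "continuous_on {0..1} f" and E: "has_expansion \<alpha> f"
  shows "expansion_coeffs f \<alpha>"
  using has_expansion_at_1[OF E] has_expansion_fourier_coeff[OF f E]
  unfolding expansion_coeffs_def by (simp add: field_simps)

lemma S_iff_expansion_coeffs_bounded:
  fixes f :: "real \<Rightarrow> complex"
  assumes f: "continuous_on {0..1} f" and f0: "f 0 = 0" and C: "expansion_coeffs f \<alpha>"
  shows "f \<in> S \<longleftrightarrow> (\<forall>h. \<bar>\<alpha> h\<bar> \<le> 2)"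
proof -
  have f1: "f 1 = of_real (\<alpha> 0)" using C by (simp add: expansion_coeffs_def)
  have at_1: "f 1 \<in> complex_of_real ` {-2..2} \<longleftrightarrow> \<bar>\<alpha> 0\<bar> \<le> 2"
    unfolding f1 by (auto simp: image_iff)
  have g_coeff: "fourier_coeff (\<lambda>t. f t - of_real t * f 1) h = - \<i> * of_real (\<alpha> h / (2 * pi * of_int h))"
    if h: "h \<noteq> 0" for h
  proof -
    have "fourier_coeff (\<lambda>t. f t - of_real t * f 1) h = fourier_coeff f h + f 1 / (2 * \<i> * of_real pi * of_int h)"
      by (rule fourier_coeff_minus_linear[OF f h])
    also have "\<dots> = of_real (\<alpha> h) / (2 * \<i> * of_real pi * of_int h)"
      using C h unfolding expansion_coeffs_def by (simp add: field_simps)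
    also have "\<dots> = - \<i> * of_real (\<alpha> h / (2 * pi * of_int h))"
      using h by (simp add: field_simps)
    finally show ?thesis .
  qed
  have away_from_0: "(Re (fourier_coeff (\<lambda>t. f t - of_real t * f 1) h) = 0 \<and>
      norm (fourier_coeff (\<lambda>t. f t - of_real t * f 1) h) \<le> 1 / (pi * \<bar>of_int h\<bar>)) \<longleftrightarrow> \<bar>\<alpha> h\<bar> \<le> 2"
    if h: "h \<noteq> 0" for h
  proof -
    have "norm (fourier_coeff (\<lambda>t. f t - of_real t * f 1) h) = \<bar>\<alpha> h\<bar> / (2 * pi * \<bar>of_int h\<bar>)"
    proof -
      have norm_i: "norm (- \<i> * complex_of_real r) = \<bar>r\<bar>" for r by (simp add: norm_mult)
      show ?thesis unfolding g_coeff[OF h] norm_i abs_divide abs_mult by simp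
    qed
    moreover have "\<bar>\<alpha> h\<bar> / (2 * pi * \<bar>of_int h\<bar>) \<le> 1 / (pi * \<bar>of_int h\<bar>) \<longleftrightarrow> \<bar>\<alpha> h\<bar> \<le> 2"
      using h pi_gt_zero by (simp add: field_simps)
    ultimately show ?thesis unfolding g_coeff[OF h] by simp
  qed
  have "f \<in> S \<longleftrightarrow> \<bar>\<alpha> 0\<bar> \<le> 2 \<and> (\<forall>h::int. h \<noteq> 0 \<longrightarrow> \<bar>\<alpha> h\<bar> \<le> 2)"
    unfolding S_def Let_def using f f0 at_1 away_from_0 by auto
  also have "\<dots> \<longleftrightarrow> (\<forall>h. \<bar>\<alpha> h\<bar> \<le> 2)" by metis
  finally show ?thesis .
qed

theorem lemma3p1:
  fixes f :: "real \<Rightarrow> complex"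
  assumes "continuous_on {0..1} f"
  shows "(f \<in> F0 \<longleftrightarrow> (\<exists>\<alpha>::int \<Rightarrow> real. has_expansion \<alpha> f))
    \<and> (f \<in> F0 \<longrightarrow> (\<forall>\<alpha>::int \<Rightarrow> real. has_expansion \<alpha> f \<longleftrightarrow> expansion_coeffs f \<alpha>))
    \<and> (f \<in> F0 \<longrightarrow> (\<forall>\<alpha>::int \<Rightarrow> real. expansion_coeffs f \<alpha> \<longrightarrow>
          (f \<in> S \<longleftrightarrow> (\<forall>h. \<bar>\<alpha> h\<bar> \<le> 2))))"
proof (intro conjI)
  have expansion_iff: "has_expansion \<alpha> f \<longleftrightarrow> expansion_coeffs f \<alpha>" if "f \<in> F0" for \<alpha>
    using has_expansion_imp_expansion_coeffs[OF assms]
      expansion_coeffs_imp_has_expansion[OF assms F0D(2)[OF that]] by blast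
  show "f \<in> F0 \<longleftrightarrow> (\<exists>\<alpha>::int \<Rightarrow> real. has_expansion \<alpha> f)"
    using expansion_coeffs_exist expansion_iff has_expansion_imp_F0[OF assms] by blast
  show "f \<in> F0 \<longrightarrow> (\<forall>\<alpha>::int \<Rightarrow> real. has_expansion \<alpha> f \<longleftrightarrow> expansion_coeffs f \<alpha>)"
    using expansion_iff by blast
  show "f \<in> F0 \<longrightarrow> (\<forall>\<alpha>::int \<Rightarrow> real. expansion_coeffs f \<alpha> \<longrightarrow>
          (f \<in> S \<longleftrightarrow> (\<forall>h. \<bar>\<alpha> h\<bar> \<le> 2)))"
    using S_iff_expansion_coeffs_bounded[OF assms] F0D(2) by blast
qed

end
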